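(* Let $k\le n$ be a positive integer. Suppose $f:2^E\times O^E\to\mathbb{R}_{\ge0}$ is worst-case monotone and worst-case submodular with respect to $p(\phi)$ and satisfies minimal dependency. Let $\pi^g$ be the adaptive worst-case greedy policy for cardinality $k$, and let $\pi^*_{wc}$ maximize $f_{wc}(\pi)$ over all policies $\pi$ with $|E(\pi,\phi)|\le k$ for all $\phi\in U^+$. Then $f_{wc}(\pi^g)\ge(1-1/e)\,f_{wc}(\pi^*_{wc})$.
   Context: Setting. $E$ is a finite set of $n$ items and $O$ a finite set of states. A realization is a function $\phi:E\to O$; $p$ is a probability distribution (prior) on the set of all realizations, $\Phi$ denotes a random realization with law $p$, and $U^+=\{\phi: p(\phi)>0\}$. A partial realization is a function $\psi:S\to O$ with $S\subseteq E$, $\mathrm{dom}(\psi)=S$; it is identified with the set of pairs $\{(e,\psi(e)):e\in S\}$, so $\psi\subseteq\psi'$ means $\mathrm{dom}(\psi)\subseteq\mathrm{dom}(\psi')$ and they agree on $\mathrm{dom}(\psi)$. A realization $\phi$ is consistent with $\psi$, written $\phi\sim\psi$, if it agrees with $\psi$ on $\mathrm{dom}(\psi)$. Only partial realizations with $\Pr[\Phi\sim\psi]>0$ are considered, and $p(\phi\mid\psi)=\Pr[\Phi=\phi\mid\Phi\sim\psi]$. For $S\subseteq E$ and a partial realization $\psi$, $f(S,\psi)=\mathbb{E}[f(S,\Phi)\mid\Phi\sim\psi]$. For $e\notin\mathrm{dom}(\psi)$, let $O(e,\psi)=\{o\in O:\exists\phi\text{ with }p(\phi\mid\psi)>0,\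 \phi(e)=o\}$ and define the worst-case marginal utility $f_{wc}(e\mid\psi)=\min_{o\in O(e,\psi)}\{f(\mathrm{dom}(\psi)\cup\{e\},\psi\cup\{(e,o)\})-f(\mathrm{dom}(\psi),\psi)\}$. $f$ is worst-case submodular if $f_{wc}(e\mid\psi)\ge f_{wc}(e\mid\psi')$ for all partial realizations $\psi\subseteq\psi'$ and all $e\in E\setminus\mathrm{dom}(\psi')$; it is worst-case monotone if $f_{wc}(e\mid\psi)\ge0$ for all $\psi$ and $e\notin\mathrm{dom}(\psi)$. $f$ satisfies minimal dependency if $f(\mathrm{dom}(\psi),\psi)=f(\mathrm{dom}(\psi),\phi)$ for every partial realization $\psi$ and every $\phi\in U^+$ with $\phi\sim\psi$. Policies. A (deterministic) policy $\pi$ is a rule which, given the current observation (the partial realization of the items selected so far), either selects a new item or stops; after an item $e$ is selected under realization $\phi$, the state $\phi(e)$ is observed. $E(\pi,\phi)$ is the set of items selected by $\pi$ under $\phi$. The worst-case utility is $f_{wc}(\pi)=\min_{\phi\in U^+}f(E(\pi,\phi),\phi)$. Adaptive worst-case greedy policy for cardinality $k$, $\pi^g$: start with $\psi_0=\emptyset$; for $t=1,\dots,k$ select $e_t\in\arg\max_{e\in E\setminus\mathrm{dom}(\psi_{t-1})}f_{wc}(e\mid\psi_{t-1})$ (ties broken arbitrarily), observe $\Phi(e_t)$, and set $\psi_t=\psi_{t-1}\cup\{(e_t,\Phi(e_t))\}$. *)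

theory Defs
  imports Complex_Main
begin

text \<open>Partial realizations are maps 'e \<rightharpoonup> 'o; realizations are total functions 'e \<Rightarrow> 'o.
  The ground set E is the (finite) universe of type 'e, the state set O the universe of 'o.\<close>

definition consistent :: "('e \<Rightarrow> 'o) \<Rightarrow> ('e \<rightharpoonup> 'o) \<Rightarrow> bool" where
  "consistent \<phi> \<psi> \<longleftrightarrow> (\<forall>e\<in>dom \<psi>. \<psi> e = Some (\<phi> e))"

definition prob_cons :: "(('e \<Rightarrow> 'o) \<Rightarrow> real) \<Rightarrow> ('e \<rightharpoonup> 'o) \<Rightarrow> real" where
  "prob_cons p \<psi> = sum p {\<phi>. consistent \<phi> \<psi>}"

definition cond_f :: "('e set \<Rightarrow> ('e \<Rightarrow> 'o) \<Rightarrow> real) \<Rightarrow> (('e \<Rightarrow> 'o) \<Rightarrow> real)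
    \<Rightarrow> 'e set \<Rightarrow> ('e \<rightharpoonup> 'o) \<Rightarrow> real" where
  "cond_f f p S \<psi> = (\<Sum>\<phi>\<in>{\<phi>. consistent \<phi> \<psi>}. p \<phi> * f S \<phi>) / prob_cons p \<psi>"

text \<open>O(e,psi): states of e possible given psi (p(phi|psi) > 0 iff phi ~ psi and p phi > 0).\<close>
definition obs_states :: "(('e \<Rightarrow> 'o) \<Rightarrow> real) \<Rightarrow> ('e \<rightharpoonup> 'o) \<Rightarrow> 'e \<Rightarrow> 'o set" where
  "obs_states p \<psi> e = {\<phi> e | \<phi>. consistent \<phi> \<psi> \<and> p \<phi> > 0}"

definition fwc_marg :: "('e set \<Rightarrow> ('e \<Rightarrow> 'o) \<Rightarrow> real) \<Rightarrow> (('e \<Rightarrow> 'o) \<Rightarrow> real)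
    \<Rightarrow> 'e \<Rightarrow> ('e \<rightharpoonup> 'o) \<Rightarrow> real" where
  "fwc_marg f p e \<psi> = Min ((\<lambda>st. cond_f f p (insert e (dom \<psi>)) (\<psi>(e \<mapsto> st)) - cond_f f p (dom \<psi>) \<psi>)
       ` obs_states p \<psi> e)"

definition wc_submodular :: "('e set \<Rightarrow> ('e \<Rightarrow> 'o) \<Rightarrow> real) \<Rightarrow> (('e \<Rightarrow> 'o) \<Rightarrow> real) \<Rightarrow> bool" where
  "wc_submodular f p \<longleftrightarrow> (\<forall>\<psi> \<psi>' e. prob_cons p \<psi> > 0 \<and> prob_cons p \<psi>' > 0 \<and> \<psi> \<subseteq>\<^sub>m \<psi>'
      \<and> e \<notin> dom \<psi>' \<longrightarrow> fwc_marg f p e \<psi> \<ge> fwc_marg f p e \<psi>')"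

definition wc_monotone :: "('e set \<Rightarrow> ('e \<Rightarrow> 'o) \<Rightarrow> real) \<Rightarrow> (('e \<Rightarrow> 'o) \<Rightarrow> real) \<Rightarrow> bool" where
  "wc_monotone f p \<longleftrightarrow> (\<forall>\<psi> e. prob_cons p \<psi> > 0 \<and> e \<notin> dom \<psi> \<longrightarrow> fwc_marg f p e \<psi> \<ge> 0)"

definition minimal_dependency :: "('e set \<Rightarrow> ('e \<Rightarrow> 'o) \<Rightarrow> real) \<Rightarrow> (('e \<Rightarrow> 'o) \<Rightarrow> real) \<Rightarrow> bool" where
  "minimal_dependency f p \<longleftrightarrow> (\<forall>\<psi> \<phi>. prob_cons p \<psi> > 0 \<and> p \<phi> > 0 \<and> consistent \<phi> \<psi>
      \<longrightarrow> cond_f f p (dom \<psi>) \<psi> = f (dom \<psi>) \<phi>)"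

text \<open>A deterministic policy maps the current observation to the next item (Some e) or stops (None).
  Selecting an already selected item is treated as stopping.\<close>
type_synonym ('e, 'o) policy = "('e \<rightharpoonup> 'o) \<Rightarrow> 'e option"

fun run :: "('e, 'o) policy \<Rightarrow> ('e \<Rightarrow> 'o) \<Rightarrow> nat \<Rightarrow> ('e \<rightharpoonup> 'o) \<Rightarrow> ('e \<rightharpoonup> 'o)" where
  "run \<pi> \<phi> 0 \<psi> = \<psi>"
| "run \<pi> \<phi> (Suc m) \<psi> = (case \<pi> \<psi> of None \<Rightarrow> \<psi>
     | Some e \<Rightarrow> if e \<in> dom \<psi> then \<psi> else run \<pi> \<phi> m (\<psi>(e \<mapsto> \<phi> e)))"

text \<open>E(pi,phi): every step adds a new item, so CARD('e) steps exhaust the run.\<close>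
definition selected :: "('e::finite, 'o) policy \<Rightarrow> ('e \<Rightarrow> 'o) \<Rightarrow> 'e set" where
  "selected \<pi> \<phi> = dom (run \<pi> \<phi> (card (UNIV :: 'e set)) Map.empty)"

definition fwc_policy :: "('e::finite set \<Rightarrow> ('e \<Rightarrow> 'o) \<Rightarrow> real) \<Rightarrow> (('e \<Rightarrow> 'o) \<Rightarrow> real)
    \<Rightarrow> ('e, 'o) policy \<Rightarrow> real" where
  "fwc_policy f p \<pi> = Min ((\<lambda>\<phi>. f (selected \<pi> \<phi>) \<phi>) ` {\<phi>. p \<phi> > 0})"

definition is_wc_greedy :: "('e set \<Rightarrow> ('e \<Rightarrow> 'o) \<Rightarrow> real) \<Rightarrow> (('e \<Rightarrow> 'o) \<Rightarrow> real) \<Rightarrow> nat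
    \<Rightarrow> ('e, 'o) policy \<Rightarrow> bool" where
  "is_wc_greedy f p k \<pi> \<longleftrightarrow> (\<forall>\<psi>. prob_cons p \<psi> > 0 \<longrightarrow>
     (if card (dom \<psi>) < k
      then (\<exists>e. \<pi> \<psi> = Some e \<and> e \<notin> dom \<psi> \<and>
              (\<forall>e'. e' \<notin> dom \<psi> \<longrightarrow> fwc_marg f p e' \<psi> \<le> fwc_marg f p e \<psi>))
      else \<pi> \<psi> = None))"

end

theory Submission
  imports Defs
begin

text \<open>Fix a realization \<phi> in the support and an observation \<psi> reached by the greedy policy
  along \<phi>, and let B be the largest worst-case marginal at \<psi>.  Running an arbitrary policy
  with budget k against an adversary that always reveals the worst-case state of the chosen
  item, worst-case submodularity caps every gain by B; hence the optimum is at most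
  f(dom \<psi>, \<phi>) + k B.  The greedy step gains at least B on \<phi>, so the gap to the optimum
  shrinks by a factor 1 - 1/k per step, and after k steps it is at most
  (1 - 1/k)^k \<le> 1/e times the optimum.\<close>

lemma dom_Some_comp [simp]: "dom (Some \<circ> \<phi>) = UNIV"
  by auto

lemma consistent_restrict_total [simp]: "consistent \<phi> ((Some \<circ> \<phi>) |` S)"
  by (simp add: consistent_def)

lemma consistent_upd_iff:
  "e \<notin> dom \<psi> \<Longrightarrow> consistent \<phi> (\<psi>(e \<mapsto> x)) \<longleftrightarrow> consistent \<phi> \<psi> \<and> \<phi> e = x"
  by (auto simp: consistent_def)

lemma consistent_upd: "consistent \<phi> \<psi> \<Longrightarrow> consistent \<phi> (\<psi>(e \<mapsto> \<phi> e))"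
  by (simp add: consistent_def)

lemma consistent_restrict_total_trans:
  assumes "consistent \<phi>' ((Some \<circ> \<phi>) |` D)" "consistent \<phi> \<psi>" "dom \<psi> \<subseteq> D"
  shows "consistent \<phi>' \<psi>"
  using assms by (fastforce simp: consistent_def)

lemma map_le_restrict_total:
  "consistent \<phi> \<psi> \<Longrightarrow> dom \<psi> \<subseteq> D \<Longrightarrow> \<psi> \<subseteq>\<^sub>m (Some \<circ> \<phi>) |` D"
  unfolding consistent_def map_le_def by auto

lemma prob_cons_pos_iff:
  fixes p :: "('e::finite \<Rightarrow> 'o::finite) \<Rightarrow> real"
  assumes "\<forall>\<phi>. p \<phi> \<ge> 0"
  shows "prob_cons p \<psi> > 0 \<longleftrightarrow> (\<exists>\<phi>. p \<phi> > 0 \<and> consistent \<phi> \<psi>)"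
proof
  assume "prob_cons p \<psi> > 0"
  then show "\<exists>\<phi>. p \<phi> > 0 \<and> consistent \<phi> \<psi>"
    unfolding prob_cons_def by (metis (mono_tags) mem_Collect_eq not_less sum_nonpos)
next
  assume "\<exists>\<phi>. p \<phi> > 0 \<and> consistent \<phi> \<psi>"
  then obtain \<phi> where "p \<phi> > 0" "consistent \<phi> \<psi>" by blast
  moreover have "p \<phi> \<le> prob_cons p \<psi>"
    unfolding prob_cons_def using calculation assms by (intro member_le_sum) auto
  ultimately show "prob_cons p \<psi> > 0" by simp
qed

definition policy_step :: "('e, 'o) policy \<Rightarrow> ('e \<Rightarrow> 'o) \<Rightarrow> ('e \<rightharpoonup> 'o) \<Rightarrow> ('e \<rightharpoonup> 'o)" where
  "policy_step \<pi> \<phi> \<psi> = (case \<pi> \<psi> of None \<Rightarrow> \<psi>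
     | Some e \<Rightarrow> if e \<in> dom \<psi> then \<psi> else \<psi>(e \<mapsto> \<phi> e))"

lemma run_Suc_policy_step: "run \<pi> \<phi> (Suc t) \<psi> = policy_step \<pi> \<phi> (run \<pi> \<phi> t \<psi>)"
proof (induction t arbitrary: \<psi>)
  case 0
  show ?case by (simp add: policy_step_def split: option.split)
next
  case (Suc t)
  have "run \<pi> \<phi> (Suc (Suc t)) \<psi> = (case \<pi> \<psi> of None \<Rightarrow> \<psi>
      | Some e \<Rightarrow> if e \<in> dom \<psi> then \<psi> else run \<pi> \<phi> (Suc t) (\<psi>(e \<mapsto> \<phi> e)))"
    by (rule run.simps(2))
  also have "\<dots> = (case \<pi> \<psi> of None \<Rightarrow> \<psi>
      | Some e \<Rightarrow> if e \<in> dom \<psi> then \<psi> else policy_step \<pi> \<phi> (run \<pi> \<phi> t (\<psi>(e \<mapsto> \<phi> e))))"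
    by (simp only: Suc.IH)
  also have "\<dots> = policy_step \<pi> \<phi> (run \<pi> \<phi> (Suc t) \<psi>)"
    by (cases "\<pi> \<psi>") (simp_all add: policy_step_def)
  finally show ?case .
qed

locale minimally_dependent_utility =
  fixes p :: "('e::finite \<Rightarrow> 'o::finite) \<Rightarrow> real"
    and f :: "'e set \<Rightarrow> ('e \<Rightarrow> 'o) \<Rightarrow> real"
  assumes prior_nonneg: "\<forall>\<phi>. p \<phi> \<ge> 0"
    and min_dependency: "minimal_dependency f p"
begin

lemma cond_f_eq_realized:
  "p \<phi> > 0 \<Longrightarrow> consistent \<phi> \<psi> \<Longrightarrow> cond_f f p (dom \<psi>) \<psi> = f (dom \<psi>) \<phi>"
  using min_dependency prob_cons_pos_iff[OF prior_nonneg]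
  unfolding minimal_dependency_def by blast

lemma cond_f_upd_eq_realized:
  "p \<phi> > 0 \<Longrightarrow> consistent \<phi> \<psi> \<Longrightarrow>
    cond_f f p (insert e (dom \<psi>)) (\<psi>(e \<mapsto> \<phi> e)) = f (insert e (dom \<psi>)) \<phi>"
  using cond_f_eq_realized[of \<phi> "\<psi>(e \<mapsto> \<phi> e)"] consistent_upd[of \<phi> \<psi> e] by simp

lemma fwc_marg_le_realized_gain:
  assumes "p \<phi> > 0" "consistent \<phi> \<psi>" "e \<notin> dom \<psi>"
  shows "fwc_marg f p e \<psi> \<le> f (insert e (dom \<psi>)) \<phi> - f (dom \<psi>) \<phi>"
proof -
  have "\<phi> e \<in> obs_states p \<psi> e"
    unfolding obs_states_def using assms by blast
  then have "fwc_marg f p e \<psi>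
      \<le> cond_f f p (insert e (dom \<psi>)) (\<psi>(e \<mapsto> \<phi> e)) - cond_f f p (dom \<psi>) \<psi>"
    unfolding fwc_marg_def by (intro Min_le) auto
  then show ?thesis
    using assms by (simp add: cond_f_upd_eq_realized cond_f_eq_realized)
qed

lemma fwc_marg_attained:
  assumes "prob_cons p \<psi> > 0"
  obtains \<phi> where "p \<phi> > 0" "consistent \<phi> \<psi>"
    "fwc_marg f p e \<psi> = f (insert e (dom \<psi>)) \<phi> - f (dom \<psi>) \<phi>"
proof -
  have "obs_states p \<psi> e \<noteq> {}"
    using assms prob_cons_pos_iff[OF prior_nonneg] unfolding obs_states_def by auto
  then have "fwc_marg f p e \<psi> \<in> (\<lambda>st. cond_f f p (insert e (dom \<psi>)) (\<psi>(e \<mapsto> st))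
      - cond_f f p (dom \<psi>) \<psi>) ` obs_states p \<psi> e"
    unfolding fwc_marg_def by (intro Min_in) auto
  then obtain \<phi> where "consistent \<phi> \<psi>" "p \<phi> > 0" and
    "fwc_marg f p e \<psi> = cond_f f p (insert e (dom \<psi>)) (\<psi>(e \<mapsto> \<phi> e)) - cond_f f p (dom \<psi>) \<psi>"
    unfolding obs_states_def by blast
  then show ?thesis
    using that by (simp add: cond_f_upd_eq_realized cond_f_eq_realized)
qed

end

locale wc_monotone_submodular_utility = minimally_dependent_utility p f
  for p :: "('e::finite \<Rightarrow> 'o::finite) \<Rightarrow> real" and f +
  assumes monotone: "wc_monotone f p"
    and submodular: "wc_submodular f p"
begin

lemma fwc_marg_nonneg:
  "p \<phi> > 0 \<Longrightarrow> consistent \<phi> \<psi> \<Longrightarrow> e \<notin> dom \<psi> \<Longrightarrow> fwc_marg f p e \<psi> \<ge> 0"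
  using monotone prob_cons_pos_iff[OF prior_nonneg] unfolding wc_monotone_def by blast

lemma realized_insert_mono:
  assumes "p \<phi> > 0"
  shows "f S \<phi> \<le> f (insert e S) \<phi>"
proof (cases "e \<in> S")
  case False
  then show ?thesis
    using fwc_marg_le_realized_gain[of \<phi> "(Some \<circ> \<phi>) |` S" e]
      fwc_marg_nonneg[of \<phi> "(Some \<circ> \<phi>) |` S" e] assms by simp
qed (simp add: insert_absorb)

lemma realized_mono:
  assumes "p \<phi> > 0" "S \<subseteq> T"
  shows "f S \<phi> \<le> f T \<phi>"
proof -
  have "f S \<phi> \<le> f (S \<union> D) \<phi>" for D
    using finite [of D]
  proof (induction D rule: finite_induct)
    case (insert e D)
    then show ?case
      using realized_insert_mono[OF assms(1), of "S \<union> D" e] by simp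
  qed simp
  from this[of T] show ?thesis
    using assms(2) by (simp add: Un_absorb1)
qed

lemma worst_case_extension:
  assumes B: "B \<ge> 0" "\<forall>e'. e' \<notin> dom \<psi> \<longrightarrow> fwc_marg f p e' \<psi> \<le> B"
    and \<phi>0: "p \<phi>0 > 0" "consistent \<phi>0 \<psi>"
    and D: "dom \<psi> \<subseteq> D"
  obtains \<phi>1 where "p \<phi>1 > 0" "consistent \<phi>1 ((Some \<circ> \<phi>0) |` D)"
    "f (insert e D) \<phi>1 \<le> f D \<phi>0 + B"
proof (cases "e \<in> D")
  case True
  show ?thesis
    by (rule that[of \<phi>0]) (use True \<phi>0 B in \<open>simp_all add: insert_absorb\<close>)
next
  case False
  let ?\<psi>D = "(Some \<circ> \<phi>0) |` D"
  have pos: "prob_cons p ?\<psi>D > 0" "prob_cons p \<psi> > 0"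
    using \<phi>0 consistent_restrict_total prob_cons_pos_iff[OF prior_nonneg] by blast+
  have "fwc_marg f p e ?\<psi>D \<le> fwc_marg f p e \<psi>"
    using submodular pos map_le_restrict_total[OF \<phi>0(2) D] False
    unfolding wc_submodular_def by (metis dom_Some_comp dom_restrict inf_top_left)
  also have "\<dots> \<le> B"
    using B False D by blast
  finally have le_B: "fwc_marg f p e ?\<psi>D \<le> B" .
  obtain \<phi>1 where \<phi>1: "p \<phi>1 > 0" "consistent \<phi>1 ?\<psi>D"
    and gain: "fwc_marg f p e ?\<psi>D = f (insert e D) \<phi>1 - f D \<phi>1"
    using fwc_marg_attained[OF pos(1), of e] by (metis dom_Some_comp dom_restrict inf_top_left)
  have "f D \<phi>1 = f D \<phi>0"
    using cond_f_eq_realized[OF \<phi>1] cond_f_eq_realized[OF \<phi>0(1) consistent_restrict_total]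
    by simp
  show ?thesis
    by (rule that[OF \<phi>1]) (use gain le_B \<open>f D \<phi>1 = f D \<phi>0\<close> in linarith)
qed

text \<open>The adversary revises the realization only on items not yet observed, so the
  run of the policy so far is unaffected; this is what lets the induction go through.\<close>

lemma adversarial_realization:
  assumes B: "B \<ge> 0" "\<forall>e. e \<notin> dom \<psi> \<longrightarrow> fwc_marg f p e \<psi> \<le> B"
  shows "p \<phi>0 > 0 \<Longrightarrow> consistent \<phi>0 \<chi> \<Longrightarrow> consistent \<phi>0 \<psi> \<Longrightarrow>
    \<exists>\<phi>. p \<phi> > 0 \<and> consistent \<phi> \<chi> \<and> consistent \<phi> \<psi> \<and>
      f (dom (run \<pi> \<phi> m \<chi>)) \<phi> \<le> f (dom \<chi> \<union> dom \<psi>) \<phi>0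
        + (real (card (dom (run \<pi> \<phi> m \<chi>))) - real (card (dom \<chi>))) * B"
proof (induction m arbitrary: \<chi> \<phi>0)
  case 0
  then show ?case
    using realized_mono[of \<phi>0 "dom \<chi>" "dom \<chi> \<union> dom \<psi>"] by auto
next
  case (Suc m)
  have stop: "f (dom \<chi>) \<phi>0 \<le> f (dom \<chi> \<union> dom \<psi>) \<phi>0"
    using realized_mono[of \<phi>0 "dom \<chi>" "dom \<chi> \<union> dom \<psi>"] Suc.prems by auto
  show ?case
  proof (cases "\<exists>e. \<pi> \<chi> = Some e \<and> e \<notin> dom \<chi>")
    case False
    then have "run \<pi> \<phi>0 (Suc m) \<chi> = \<chi>"
      by (cases "\<pi> \<chi>") auto
    then show ?thesis
      using Suc.prems stop by (intro exI[of _ \<phi>0]) auto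
  next
    case True
    then obtain e where e: "\<pi> \<chi> = Some e" "e \<notin> dom \<chi>" by blast
    define D where "D = dom \<chi> \<union> dom \<psi>"
    obtain \<phi>1 where \<phi>1: "p \<phi>1 > 0" "consistent \<phi>1 ((Some \<circ> \<phi>0) |` D)"
      and gain: "f (insert e D) \<phi>1 \<le> f D \<phi>0 + B"
      using worst_case_extension[OF B Suc.prems(1,3)] unfolding D_def by blast
    define \<chi>' where "\<chi>' = \<chi>(e \<mapsto> \<phi>1 e)"
    have \<phi>1_\<chi>: "consistent \<phi>1 \<chi>" and \<phi>1_\<psi>: "consistent \<phi>1 \<psi>"
      using consistent_restrict_total_trans[OF \<phi>1(2)] Suc.prems(2,3) unfolding D_def by auto
    obtain \<phi> where \<phi>: "p \<phi> > 0" "consistent \<phi> \<chi>'" "consistent \<phi> \<psi>"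
      and bound: "f (dom (run \<pi> \<phi> m \<chi>')) \<phi> \<le> f (dom \<chi>' \<union> dom \<psi>) \<phi>1
        + (real (card (dom (run \<pi> \<phi> m \<chi>'))) - real (card (dom \<chi>'))) * B"
      using Suc.IH[OF \<phi>1(1) consistent_upd[OF \<phi>1_\<chi>] \<phi>1_\<psi>] unfolding \<chi>'_def by blast
    have \<phi>_\<chi>: "consistent \<phi> \<chi>" "\<phi> e = \<phi>1 e"
      using \<phi>(2) e(2) by (simp_all add: \<chi>'_def consistent_upd_iff)
    have run_eq: "run \<pi> \<phi> (Suc m) \<chi> = run \<pi> \<phi> m \<chi>'"
      using e \<phi>_\<chi>(2) by (simp add: \<chi>'_def)
    have dom_eq: "dom \<chi>' \<union> dom \<psi> = insert e D"
      by (auto simp: \<chi>'_def D_def)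
    have card_eq: "card (dom \<chi>') = Suc (card (dom \<chi>))"
      using e(2) by (simp add: \<chi>'_def)
    let ?n = "real (card (dom (run \<pi> \<phi> m \<chi>')))"
    have "f (dom (run \<pi> \<phi> m \<chi>')) \<phi> \<le> f D \<phi>0 + B + (?n - real (Suc (card (dom \<chi>)))) * B"
      using bound gain unfolding dom_eq card_eq by linarith
    also have "\<dots> = f D \<phi>0 + (?n - real (card (dom \<chi>))) * B"
      by (simp add: algebra_simps)
    finally have "f (dom (run \<pi> \<phi> (Suc m) \<chi>)) \<phi> \<le> f D \<phi>0
        + (real (card (dom (run \<pi> \<phi> (Suc m) \<chi>))) - real (card (dom \<chi>))) * B"
      unfolding run_eq .
    with \<phi>(1,3) \<phi>_\<chi>(1) show ?thesis
      unfolding D_def by blast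
  qed
qed

lemma fwc_policy_le_budget_bound:
  assumes B: "B \<ge> 0" "\<forall>e. e \<notin> dom \<psi> \<longrightarrow> fwc_marg f p e \<psi> \<le> B"
    and \<phi>0: "p \<phi>0 > 0" "consistent \<phi>0 \<psi>"
    and budget: "\<forall>\<phi>. p \<phi> > 0 \<longrightarrow> card (selected \<pi> \<phi>) \<le> k"
  shows "fwc_policy f p \<pi> \<le> f (dom \<psi>) \<phi>0 + real k * B"
proof -
  obtain \<phi> where \<phi>: "p \<phi> > 0"
    and bound: "f (selected \<pi> \<phi>) \<phi> \<le> f (dom \<psi>) \<phi>0 + real (card (selected \<pi> \<phi>)) * B"
    using adversarial_realization[OF B \<phi>0(1) _ \<phi>0(2), of Map.empty \<pi> "card (UNIV :: 'e set)"]
    unfolding selected_def consistent_def by auto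
  have "fwc_policy f p \<pi> \<le> f (selected \<pi> \<phi>) \<phi>"
    unfolding fwc_policy_def using \<phi> by (intro Min_le) auto
  also have "\<dots> \<le> f (dom \<psi>) \<phi>0 + real k * B"
    using bound budget \<phi> B(1) mult_right_mono[of "real (card (selected \<pi> \<phi>))" "real k" B]
    by simp
  finally show ?thesis .
qed

lemma greedy_choice_gap:
  assumes k: "0 < k" and budget: "\<forall>\<phi>. p \<phi> > 0 \<longrightarrow> card (selected \<pi> \<phi>) \<le> k"
    and \<phi>: "p \<phi> > 0" "consistent \<phi> \<psi>"
    and e: "e \<notin> dom \<psi>" "\<forall>e'. e' \<notin> dom \<psi> \<longrightarrow> fwc_marg f p e' \<psi> \<le> fwc_marg f p e \<psi>"
  shows "fwc_policy f p \<pi> - f (insert e (dom \<psi>)) \<phi>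
    \<le> (1 - 1 / real k) * (fwc_policy f p \<pi> - f (dom \<psi>) \<phi>)"
proof -
  define B where "B = fwc_marg f p e \<psi>"
  define gap where "gap = fwc_policy f p \<pi> - f (dom \<psi>) \<phi>"
  have "B \<ge> 0"
    unfolding B_def using fwc_marg_nonneg \<phi> e(1) by blast
  moreover have "\<forall>e'. e' \<notin> dom \<psi> \<longrightarrow> fwc_marg f p e' \<psi> \<le> B"
    using e(2) unfolding B_def .
  ultimately have "fwc_policy f p \<pi> \<le> f (dom \<psi>) \<phi> + real k * B"
    by (rule fwc_policy_le_budget_bound[OF _ _ \<phi> budget])
  then have "gap \<le> real k * B"
    unfolding gap_def by simp
  then have "gap / real k \<le> B"
    using k by (simp add: divide_le_eq mult.commute)
  moreover have "f (dom \<psi>) \<phi> + B \<le> f (insert e (dom \<psi>)) \<phi>"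
    using fwc_marg_le_realized_gain[OF \<phi> e(1)] unfolding B_def by simp
  ultimately have "fwc_policy f p \<pi> - f (insert e (dom \<psi>)) \<phi> \<le> gap - gap / real k"
    unfolding gap_def by linarith
  also have "\<dots> = (1 - 1 / real k) * gap"
    by (simp add: algebra_simps)
  finally show ?thesis
    unfolding gap_def .
qed

lemma greedy_run_gap:
  assumes greedy: "is_wc_greedy f p k \<pi>g"
    and k: "0 < k" and budget: "\<forall>\<phi>. p \<phi> > 0 \<longrightarrow> card (selected \<pi> \<phi>) \<le> k"
    and \<phi>: "p \<phi> > 0"
  shows "t \<le> k \<Longrightarrow> consistent \<phi> (run \<pi>g \<phi> t Map.empty)
    \<and> card (dom (run \<pi>g \<phi> t Map.empty)) = t
    \<and> fwc_policy f p \<pi> - f (dom (run \<pi>g \<phi> t Map.empty)) \<phi>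
        \<le> (1 - 1 / real k) ^ t * (fwc_policy f p \<pi> - f {} \<phi>)"
proof (induction t)
  case 0
  then show ?case by (simp add: consistent_def)
next
  case (Suc t)
  define \<psi> where "\<psi> = run \<pi>g \<phi> t Map.empty"
  have \<psi>: "consistent \<phi> \<psi>" "card (dom \<psi>) = t"
    and IH: "fwc_policy f p \<pi> - f (dom \<psi>) \<phi> \<le> (1 - 1 / real k) ^ t * (fwc_policy f p \<pi> - f {} \<phi>)"
    using Suc unfolding \<psi>_def by auto
  have "prob_cons p \<psi> > 0"
    using \<psi>(1) \<phi> prob_cons_pos_iff[OF prior_nonneg] by blast
  then obtain e where e: "\<pi>g \<psi> = Some e" "e \<notin> dom \<psi>"
    and e_max: "\<forall>e'. e' \<notin> dom \<psi> \<longrightarrow> fwc_marg f p e' \<psi> \<le> fwc_marg f p e \<psi>"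
    using greedy Suc.prems \<psi>(2) unfolding is_wc_greedy_def by (metis Suc_le_lessD)
  have step: "run \<pi>g \<phi> (Suc t) Map.empty = \<psi>(e \<mapsto> \<phi> e)"
    using e unfolding \<psi>_def run_Suc_policy_step by (simp add: policy_step_def)
  have "fwc_policy f p \<pi> - f (insert e (dom \<psi>)) \<phi>
      \<le> (1 - 1 / real k) * (fwc_policy f p \<pi> - f (dom \<psi>) \<phi>)"
    by (rule greedy_choice_gap[OF k budget \<phi> \<psi>(1) e(2) e_max])
  also have "\<dots> \<le> (1 - 1 / real k) ^ Suc t * (fwc_policy f p \<pi> - f {} \<phi>)"
    using mult_left_mono[OF IH, of "1 - 1 / real k"] k by (simp add: field_simps)
  finally have "fwc_policy f p \<pi> - f (insert e (dom \<psi>)) \<phi>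
      \<le> (1 - 1 / real k) ^ Suc t * (fwc_policy f p \<pi> - f {} \<phi>)" .
  moreover have "card (insert e (dom \<psi>)) = Suc t"
    using \<psi>(2) e(2) by simp
  moreover have "dom (\<psi>(e \<mapsto> \<phi> e)) = insert e (dom \<psi>)"
    by simp
  ultimately show ?case
    unfolding step using consistent_upd[OF \<psi>(1)] by (simp only:)
qed

lemma selected_greedy:
  assumes greedy: "is_wc_greedy f p k \<pi>g"
    and k: "k \<le> card (UNIV :: 'e set)"
    and run_k: "consistent \<phi> (run \<pi>g \<phi> k Map.empty)" "card (dom (run \<pi>g \<phi> k Map.empty)) = k"
    and \<phi>: "p \<phi> > 0"
  shows "selected \<pi>g \<phi> = dom (run \<pi>g \<phi> k Map.empty)"
proof -
  have "prob_cons p (run \<pi>g \<phi> k Map.empty) > 0"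
    using run_k(1) \<phi> prob_cons_pos_iff[OF prior_nonneg] by blast
  then have stop: "\<pi>g (run \<pi>g \<phi> k Map.empty) = None"
    using greedy run_k(2) unfolding is_wc_greedy_def by auto
  have "run \<pi>g \<phi> (k + d) Map.empty = run \<pi>g \<phi> k Map.empty" for d
    by (induction d) (simp_all add: run_Suc_policy_step policy_step_def stop del: run.simps(2))
  from this[of "card (UNIV :: 'e set) - k"] show ?thesis
    using k unfolding selected_def by simp
qed

lemma greedy_realized_ge:
  assumes greedy: "is_wc_greedy f p k \<pi>g"
    and k: "0 < k" "k \<le> card (UNIV :: 'e set)"
    and budget: "\<forall>\<phi>. p \<phi> > 0 \<longrightarrow> card (selected \<pi> \<phi>) \<le> k"
    and f_nonneg: "\<forall>S \<phi>. f S \<phi> \<ge> 0" and opt_nonneg: "fwc_policy f p \<pi> \<ge> 0"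
    and \<phi>: "p \<phi> > 0"
  shows "f (selected \<pi>g \<phi>) \<phi> \<ge> (1 - 1 / exp 1) * fwc_policy f p \<pi>"
proof -
  define q where "q = (1 - 1 / real k) ^ k"
  have run_k: "consistent \<phi> (run \<pi>g \<phi> k Map.empty)" "card (dom (run \<pi>g \<phi> k Map.empty)) = k"
    and gap: "fwc_policy f p \<pi> - f (selected \<pi>g \<phi>) \<phi> \<le> q * (fwc_policy f p \<pi> - f {} \<phi>)"
    using greedy_run_gap[OF greedy k(1) budget \<phi> order.refl] selected_greedy[OF greedy k(2) _ _ \<phi>]
    unfolding q_def by auto
  have "q \<le> exp (- 1)"
    unfolding q_def using exp_ge_one_minus_x_over_n_power_n[of 1 k] k(1) by simp
  moreover have "0 \<le> q"
    unfolding q_def using k(1) by simp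
  moreover have "fwc_policy f p \<pi> - f {} \<phi> \<le> fwc_policy f p \<pi>"
    using f_nonneg by simp
  ultimately have "q * (fwc_policy f p \<pi> - f {} \<phi>) \<le> exp (- 1) * fwc_policy f p \<pi>"
    using opt_nonneg by (meson mult_left_mono mult_right_mono order.trans)
  then show ?thesis
    using gap by (simp add: exp_minus inverse_eq_divide algebra_simps)
qed

end

theorem theorem2:
  fixes p :: "('e::finite \<Rightarrow> 'o::finite) \<Rightarrow> real"
    and f :: "'e set \<Rightarrow> ('e \<Rightarrow> 'o) \<Rightarrow> real"
    and k :: nat
    and \<pi>g :: "('e, 'o) policy"
  assumes p_nonneg: "\<forall>\<phi>. p \<phi> \<ge> 0"
    and p_sum: "sum p UNIV = 1"
    and k_pos: "0 < k"
    and k_le: "k \<le> card (UNIV :: 'e set)"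
    and f_nonneg: "\<forall>S \<phi>. f S \<phi> \<ge> 0"
    and mono: "wc_monotone f p"
    and submod: "wc_submodular f p"
    and mindep: "minimal_dependency f p"
    and greedy: "is_wc_greedy f p k \<pi>g"
  shows "\<forall>\<pi>. (\<forall>\<phi>. p \<phi> > 0 \<longrightarrow> card (selected \<pi> \<phi>) \<le> k) \<longrightarrow>
           fwc_policy f p \<pi>g \<ge> (1 - 1 / exp 1) * fwc_policy f p \<pi>"
proof (intro allI impI)
  fix \<pi> :: "('e, 'o) policy"
  assume budget: "\<forall>\<phi>. p \<phi> > 0 \<longrightarrow> card (selected \<pi> \<phi>) \<le> k"
  interpret wc_monotone_submodular_utility p f
    using p_nonneg mono submod mindep by unfold_locales
  have support: "{\<phi>. p \<phi> > 0} \<noteq> {}"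
  proof
    assume "{\<phi>. p \<phi> > 0} = {}"
    then have "sum p UNIV \<le> 0"
      by (intro sum_nonpos) (auto simp: not_less)
    with p_sum show False by simp
  qed
  then have "fwc_policy f p \<pi> \<ge> 0"
    unfolding fwc_policy_def using f_nonneg by (subst Min_ge_iff) auto
  then show "fwc_policy f p \<pi>g \<ge> (1 - 1 / exp 1) * fwc_policy f p \<pi>"
    unfolding fwc_policy_def[of f p \<pi>g] using support
      greedy_realized_ge[OF greedy k_pos k_le budget f_nonneg]
    by (subst Min_ge_iff) auto
qed

end
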